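(* Let $g\ge1$, $n=g+1$, and let $Q$ be the $g\times g$ matrix with $Q_{ii}=2$, $Q_{ij}=1$ for $i\ne j$. Let $k\in\{1,\dots,g\}$ and let $\mathbf a\in[\mathbf k]$ be a vertex of $V_Q$. Then the Delaunay polytope $D_{\mathbf a,Q}$ is combinatorially equivalent to the hypersimplex $\Delta_{k,n}$, the matroid base polytope of the uniform matroid $U_{k,n}$.
   Context: $V_Q=\{\mathbf a\in\mathbb R^g:\ \mathbf a^TQ\mathbf a\le(\mathbf a-\mathbf c)^TQ(\mathbf a-\mathbf c)\ \forall\mathbf c\in\mathbb Z^g\}$ (Voronoi polytope of the genus-$g$ banana graph). $[\mathbf k]\subset\mathbb R^g$ is the set of vectors with entries in $\{-\tfrac{k}{g+1},\tfrac{g+1-k}{g+1}\}$ having either $k$ or $k-1$ entries equal to $\tfrac{g+1-k}{g+1}$. $D_{\mathbf a,Q}$ is the convex hull of $\mathcal D_{\mathbf a,Q}=\{\mathbf c\in\mathbb Z^g:\ \mathbf a^TQ\mathbf a=(\mathbf a-\mathbf c)^TQ(\mathbf a-\mathbf c)\}$. $\Delta_{k,n}=\mathrm{Conv}\{\sum_{i\in I}\mathbf e_i:|I|=k\}\subset\mathbb R^n$. *)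

theory Defs
  imports "HOL-Analysis.Analysis"
begin

text \<open>The genus-g banana graph matrix Q: Q_ii = 2, Q_ij = 1 for i \<noteq> j.
  Vectors of R^g are modelled as real^'g with 'g an arbitrary finite type, g = CARD('g).\<close>
definition banana_Q :: "'g::finite \<Rightarrow> 'g \<Rightarrow> real" where
  "banana_Q i j = (if i = j then 2 else 1)"

definition qform :: "('g::finite \<Rightarrow> 'g \<Rightarrow> real) \<Rightarrow> real^'g \<Rightarrow> real" where
  "qform Q x = (\<Sum>i\<in>UNIV. \<Sum>j\<in>UNIV. x$i * Q i j * x$j)"

definition int_vec :: "real^'g::finite \<Rightarrow> bool" where
  "int_vec c \<longleftrightarrow> (\<forall>i. c$i \<in> \<int>)"

definition voronoi :: "('g::finite \<Rightarrow> 'g \<Rightarrow> real) \<Rightarrow> (real^'g) set" where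
  "voronoi Q = {a. \<forall>c. int_vec c \<longrightarrow> qform Q a \<le> qform Q (a - c)}"

definition delaunay_set :: "('g::finite \<Rightarrow> 'g \<Rightarrow> real) \<Rightarrow> real^'g \<Rightarrow> (real^'g) set" where
  "delaunay_set Q a = {c. int_vec c \<and> qform Q a = qform Q (a - c)}"

definition delaunay_polytope :: "('g::finite \<Rightarrow> 'g \<Rightarrow> real) \<Rightarrow> real^'g \<Rightarrow> (real^'g) set" where
  "delaunay_polytope Q a = convex hull (delaunay_set Q a)"

definition bracket_k :: "nat \<Rightarrow> (real^'g::finite) set" where
  "bracket_k k = {a.
     (\<forall>i. a$i = - real k / real (CARD('g) + 1)
          \<or> a$i = real (CARD('g) + 1 - k) / real (CARD('g) + 1))
   \<and> (card {i. a$i = real (CARD('g) + 1 - k) / real (CARD('g) + 1)} = k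
      \<or> card {i. a$i = real (CARD('g) + 1 - k) / real (CARD('g) + 1)} = k - 1)}"

definition hypersimplex :: "nat \<Rightarrow> (real^'n::finite) set" where
  "hypersimplex k = convex hull {(\<chi> i. if i \<in> I then 1 else 0) | I. card I = k}"

definition comb_equiv :: "('a::real_vector) set \<Rightarrow> ('b::real_vector) set \<Rightarrow> bool" where
  "comb_equiv P P' \<longleftrightarrow> (\<exists>f. bij_betw f {F. F face_of P} {G. G face_of P'}
      \<and> (\<forall>F1 F2. F1 face_of P \<longrightarrow> F2 face_of P \<longrightarrow> (F1 \<subseteq> F2 \<longleftrightarrow> f F1 \<subseteq> f F2)))"

end

theory Submission
  imports Defs
begin

(* The embedding x |-> (-(x_1 + ... + x_g), x) of R^g into the hyperplane y_0 + ... + y_g = 0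
   of R^(g+1) turns x^T Q x into the Euclidean norm (Q is the Gram matrix of the root lattice
   A_g) and Z^g into the integer vectors of that hyperplane. A point of [k] lifts to q 1 + e_T
   with q = -k/(g+1) and |T| = k. For an integer zero-sum vector w, the excess
   |q 1 + e_T - w|^2 - |q 1 + e_T|^2 equals the sum of d_j^2 - d_j over the integer vector
   d = e_T - w; it is nonnegative and vanishes exactly when d is a 0/1 vector, necessarily
   with k ones. So c |-> lift(a - c) - q 1 is an injective affine map sending the Delaunay set
   onto the vertices of Delta_{k,n}, hence D_{a,Q} onto Delta_{k,n}, and such maps preserve
   face lattices. *)

lemma comb_equiv_image:
  assumes "inj f" and faces: "{G. G face_of f ` P} = image f ` {F. F face_of P}"
  shows "comb_equiv P (f ` P)"
  unfolding comb_equiv_def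
proof (intro exI[of _ "image f"] conjI allI impI)
  have "inj_on (image f) {F. F face_of P}"
    using \<open>inj f\<close> by (simp add: inj_on_def inj_image_eq_iff)
  then show "bij_betw (image f) {F. F face_of P} {G. G face_of f ` P}"
    unfolding faces by (rule inj_on_imp_bij_betw)
next
  fix F1 F2
  show "F1 \<subseteq> F2 \<longleftrightarrow> f ` F1 \<subseteq> f ` F2"
    using \<open>inj f\<close> by (simp add: inj_image_subset_iff)
qed

lemma comb_equiv_affine_image:
  fixes h :: "'a::real_vector \<Rightarrow> 'b::real_vector"
  assumes "linear h" and "inj h"
  shows "comb_equiv P ((\<lambda>x. t + h x) ` P)"
proof (rule comb_equiv_image)
  show "inj (\<lambda>x. t + h x)"
    using \<open>inj h\<close> by (simp add: inj_def)
  have "{G. G face_of (\<lambda>x. t + h x) ` P} = {G. G face_of (+) t ` h ` P}"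
    by (simp only: image_image)
  also have "\<dots> = image ((+) t) ` image h ` {F. F face_of P}"
    by (simp only: faces_of_translation faces_of_linear_image[OF assms])
  also have "\<dots> = image (\<lambda>x. t + h x) ` {F. F face_of P}"
    by (simp only: image_image)
  finally show "{G. G face_of (\<lambda>x. t + h x) ` P} = image (\<lambda>x. t + h x) ` {F. F face_of P}" .
qed

lemma convex_hull_affine_image:
  assumes "linear h"
  shows "convex hull ((\<lambda>x. t + h x) ` S) = (\<lambda>x. t + h x) ` (convex hull S)"
proof -
  have "convex hull ((\<lambda>x. t + h x) ` S) = (+) t ` h ` (convex hull S)"
    by (simp only: image_image[symmetric] convex_hull_translation
        convex_hull_linear_image[OF assms, symmetric])
  then show ?thesis
    by (simp only: image_image)
qed

lemma sum_indicator_UNIV: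
  fixes I :: "'a::finite set"
  shows "(\<Sum>i\<in>UNIV. if i \<in> I then (1::real) else 0) = real (card I)"
  by (simp add: sum.If_cases)

lemma zero_one_vectors_with_sum:
  "{v :: real^'n::finite. (\<forall>j. v$j \<in> {0, 1}) \<and> (\<Sum>j\<in>UNIV. v$j) = real k}
     = {(\<chi> i. if i \<in> I then 1 else 0) | I. card I = k}"
proof (intro set_eqI iffI)
  fix v :: "real^'n"
  assume v: "v \<in> {v. (\<forall>j. v$j \<in> {0, 1}) \<and> (\<Sum>j\<in>UNIV. v$j) = real k}"
  define I where "I = {j. v$j = 1}"
  have v_eq: "v = (\<chi> i. if i \<in> I then 1 else 0)"
    using v by (auto simp: vec_eq_iff I_def)
  have "real (card I) = (\<Sum>j\<in>UNIV. v$j)"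
    by (simp add: v_eq sum_indicator_UNIV)
  with v have "card I = k"
    by simp
  with v_eq show "v \<in> {(\<chi> i. if i \<in> I then 1 else 0) | I. card I = k}"
    by auto
qed (auto simp: sum_indicator_UNIV)

lemma sum_UNIV_option:
  fixes f :: "'a::finite option \<Rightarrow> 'b::comm_monoid_add"
  shows "(\<Sum>j\<in>UNIV. f j) = f None + (\<Sum>i\<in>UNIV. f (Some i))"
proof -
  have "(\<Sum>j\<in>UNIV. f j) = (\<Sum>j\<in>insert None (range Some). f j)"
    by (simp add: UNIV_option_conv[symmetric])
  also have "\<dots> = f None + (\<Sum>i\<in>UNIV. f (Some i))"
    by (simp add: sum.reindex)
  finally show ?thesis .
qed

definition zero_sum_lift :: "real^'g::finite \<Rightarrow> real^('g option)" where
  "zero_sum_lift x = (\<chi> j. case j of None \<Rightarrow> - (\<Sum>i\<in>UNIV. x$i) | Some i \<Rightarrow> x$i)"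

lemma zero_sum_lift_None [simp]: "zero_sum_lift x $ None = - (\<Sum>i\<in>UNIV. x$i)"
  and zero_sum_lift_Some [simp]: "zero_sum_lift x $ Some i = x $ i"
  by (simp_all add: zero_sum_lift_def)

lemma linear_zero_sum_lift: "linear zero_sum_lift"
  by (rule linearI)
    (auto simp: vec_eq_iff zero_sum_lift_def sum.distrib sum_distrib_left split: option.splits)

lemma inj_zero_sum_lift: "inj zero_sum_lift"
  by (rule injI) (metis zero_sum_lift_Some vec_eq_iff)

lemma sum_zero_sum_lift: "(\<Sum>j\<in>UNIV. zero_sum_lift x $ j) = 0"
  by (simp add: sum_UNIV_option)

lemma zero_sum_lift_restrict:
  assumes "(\<Sum>j\<in>UNIV. y $ j) = 0"
  shows "zero_sum_lift (\<chi> i. y $ Some i) = y"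
proof -
  have "y $ None = - (\<Sum>i\<in>UNIV. y $ Some i)"
    using assms by (simp add: sum_UNIV_option eq_neg_iff_add_eq_0)
  then have "zero_sum_lift (\<chi> i. y $ Some i) $ j = y $ j" for j
    by (cases j) simp_all
  then show ?thesis
    by (simp add: vec_eq_iff)
qed

lemma zero_sum_lift_diff: "zero_sum_lift (x - y) = zero_sum_lift x - zero_sum_lift y"
  by (rule linear_diff[OF linear_zero_sum_lift])

lemma Ints_zero_sum_lift: "int_vec c \<Longrightarrow> zero_sum_lift c $ j \<in> \<int>"
  by (cases j) (auto simp: int_vec_def intro!: Ints_sum)

lemma qform_banana_Q_eq_sum_squares:
  "qform banana_Q x = (\<Sum>j\<in>UNIV. (zero_sum_lift x $ j)\<^sup>2)"
proof -
  have row: "(\<Sum>j\<in>UNIV. x$i * banana_Q i j * x$j) = x$i * (\<Sum>j\<in>UNIV. x$j) + (x$i)\<^sup>2" for i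
  proof -
    have "(\<Sum>j\<in>UNIV. x$i * banana_Q i j * x$j)
        = (\<Sum>j\<in>UNIV. x$i * x$j + (if i = j then x$i * x$j else 0))"
      by (rule sum.cong) (auto simp: banana_Q_def)
    then show ?thesis
      by (simp add: sum.distrib sum_distrib_left power2_eq_square)
  qed
  have "qform banana_Q x = (\<Sum>i\<in>UNIV. x$i)\<^sup>2 + (\<Sum>i\<in>UNIV. (x$i)\<^sup>2)"
    by (simp add: qform_def row sum.distrib sum_distrib_right[symmetric] power2_eq_square)
  then show ?thesis
    by (simp add: sum_UNIV_option)
qed

lemma Ints_square_minus_self_nonneg:
  fixes x :: "'a::linordered_idom"
  assumes "x \<in> \<int>"
  shows "0 \<le> x\<^sup>2 - x"
proof -
  obtain m where x: "x = of_int m"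
    using assms by (auto elim: Ints_cases)
  have "0 \<le> m * (m - 1)"
    by (cases "m \<le> 0") (auto simp: zero_le_mult_iff)
  then have "0 \<le> x * (x - 1)"
    unfolding x by (metis of_int_0_le_iff of_int_1 of_int_diff of_int_mult)
  then show ?thesis
    by (simp add: power2_eq_square algebra_simps)
qed

(* The offset q plays no role because the entries of w sum to 0. *)
lemma sum_squares_shift_eq_iff:
  fixes e w :: "'n::finite \<Rightarrow> real"
  assumes e: "\<And>j. e j \<in> {0, 1}" and w_int: "\<And>j. w j \<in> \<int>" and w_sum: "(\<Sum>j\<in>UNIV. w j) = 0"
  shows "(\<Sum>j\<in>UNIV. (q + e j - w j)\<^sup>2) = (\<Sum>j\<in>UNIV. (q + e j)\<^sup>2) \<longleftrightarrow> (\<forall>j. e j - w j \<in> {0, 1})"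
proof -
  define d where "d j = e j - w j" for j
  have "(q + e j - w j)\<^sup>2 - (q + e j)\<^sup>2 = ((d j)\<^sup>2 - d j) - (1 + 2 * q) * w j" for j
    using e[of j] by (auto simp: d_def power2_eq_square algebra_simps)
  then have "(\<Sum>j\<in>UNIV. (q + e j - w j)\<^sup>2) - (\<Sum>j\<in>UNIV. (q + e j)\<^sup>2)
      = (\<Sum>j\<in>UNIV. ((d j)\<^sup>2 - d j) - (1 + 2 * q) * w j)"
    by (simp add: sum_subtractf[symmetric])
  also have "\<dots> = (\<Sum>j\<in>UNIV. (d j)\<^sup>2 - d j)"
    using w_sum by (simp add: sum_subtractf sum_distrib_left[symmetric])
  finally have excess: "(\<Sum>j\<in>UNIV. (q + e j - w j)\<^sup>2) - (\<Sum>j\<in>UNIV. (q + e j)\<^sup>2)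
      = (\<Sum>j\<in>UNIV. (d j)\<^sup>2 - d j)" .
  have "0 \<le> (d j)\<^sup>2 - d j" for j
    using w_int[of j] e[of j] by (intro Ints_square_minus_self_nonneg) (auto simp: d_def)
  then have "(\<Sum>j\<in>UNIV. (d j)\<^sup>2 - d j) = 0 \<longleftrightarrow> (\<forall>j. (d j)\<^sup>2 - d j = 0)"
    by (simp add: sum_nonneg_eq_0_iff)
  also have "\<dots> \<longleftrightarrow> (\<forall>j. d j \<in> {0, 1})"
    by (simp add: power2_eq_square algebra_simps)
  finally show ?thesis
    by (subst eq_iff_diff_eq_0) (simp only: excess d_def)
qed

lemma zero_sum_lift_bracket_k:
  fixes a :: "real^'g::finite" and k :: nat
  defines "q \<equiv> - real k / real (CARD('g) + 1)"
  assumes "a \<in> bracket_k k" and "1 \<le> k" and "k \<le> CARD('g)"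
  shows "zero_sum_lift a $ j \<in> {q, q + 1}"
proof -
  define S where "S = {i. a$i = q + 1}"
  have "real (CARD('g) + 1 - k) / real (CARD('g) + 1) = q + 1"
    using assms(4) by (simp add: q_def field_simps of_nat_diff)
  then have coords: "a$i = q + (if i \<in> S then 1 else 0)" and card_S: "card S \<in> {k, k - 1}" for i
    using assms(2) by (auto simp: bracket_k_def S_def q_def)
  have "zero_sum_lift a $ None = - real CARD('g) * q - real (card S)"
    by (simp add: coords sum.distrib sum_indicator_UNIV)
  also have "- real CARD('g) * q = real k + q"
    by (simp add: q_def field_simps)
  finally have lift_None: "zero_sum_lift a $ None = real k + q - real (card S)" .
  have "real (card S) \<in> {real k, real k - 1}"
    using card_S assms(3) by (auto simp: of_nat_diff)
  then show ?thesis
    using lift_None coords by (cases j) auto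
qed

lemma delaunay_set_banana_Q:
  fixes a :: "real^'g::finite"
  assumes a: "\<And>j. zero_sum_lift a $ j \<in> {q, q + 1}"
  shows "delaunay_set banana_Q a = {c. int_vec c \<and> (\<forall>j. zero_sum_lift (a - c) $ j \<in> {q, q + 1})}"
proof -
  have "qform banana_Q a = qform banana_Q (a - c) \<longleftrightarrow> (\<forall>j. zero_sum_lift (a - c) $ j \<in> {q, q + 1})"
    if "int_vec c" for c
  proof -
    define e where "e j = zero_sum_lift a $ j - q" for j
    have e01: "e j \<in> {0, 1}" for j
      using a[of j] by (auto simp: e_def)
    have lift_diff: "zero_sum_lift (a - c) $ j = q + e j - zero_sum_lift c $ j" for j
      by (simp add: zero_sum_lift_diff e_def)
    have "(\<Sum>j\<in>UNIV. (q + e j - zero_sum_lift c $ j)\<^sup>2) = (\<Sum>j\<in>UNIV. (q + e j)\<^sup>2)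
          \<longleftrightarrow> (\<forall>j. e j - zero_sum_lift c $ j \<in> {0, 1})"
      using e01 Ints_zero_sum_lift[OF that] sum_zero_sum_lift by (rule sum_squares_shift_eq_iff)
    then show ?thesis
      by (auto simp: qform_banana_Q_eq_sum_squares lift_diff e_def algebra_simps)
  qed
  then show ?thesis
    unfolding delaunay_set_def by blast
qed

lemma in_delaunay_set_banana_Q_image:
  fixes a :: "real^'g::finite" and v :: "real^'g option"
  assumes a: "\<And>j. zero_sum_lift a $ j \<in> {q, q + 1}" and q: "real CARD('g option) * q = - real k"
    and v01: "\<And>j. v$j \<in> {0, 1}" and v_sum: "(\<Sum>j\<in>UNIV. v$j) = real k"
  shows "v \<in> (\<lambda>c. zero_sum_lift (a - c) - (\<chi> j. q)) ` delaunay_set banana_Q a"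
proof -
  define y where "y = zero_sum_lift a - (\<chi> j. q) - v"
  define c where "c = (\<chi> i. y $ Some i)"
  have "(\<Sum>j\<in>UNIV. y $ j) = 0"
    using v_sum q by (simp add: y_def sum_subtractf sum_zero_sum_lift)
  then have lift_c: "zero_sum_lift c = y"
    unfolding c_def by (rule zero_sum_lift_restrict)
  have "c $ i = (zero_sum_lift a $ Some i - q) - v $ Some i" for i
    by (simp add: c_def y_def)
  moreover have "zero_sum_lift a $ Some i - q \<in> \<int>" and "v $ Some i \<in> \<int>" for i
    using a[of "Some i"] v01[of "Some i"] by auto
  ultimately have "int_vec c"
    by (simp add: int_vec_def)
  moreover have lift_ac: "zero_sum_lift (a - c) = (\<chi> j. q) + v"
    using lift_c by (simp add: zero_sum_lift_diff y_def)
  ultimately have "c \<in> delaunay_set banana_Q a"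
    using v01 by (auto simp: delaunay_set_banana_Q[OF a])
  moreover have "v = zero_sum_lift (a - c) - (\<chi> j. q)"
    by (simp add: lift_ac)
  ultimately show ?thesis
    by blast
qed

lemma delaunay_set_banana_Q_image:
  fixes a :: "real^'g::finite"
  assumes a: "\<And>j. zero_sum_lift a $ j \<in> {q, q + 1}" and q: "real CARD('g option) * q = - real k"
  shows "(\<lambda>c. zero_sum_lift (a - c) - (\<chi> j. q)) ` delaunay_set banana_Q a
       = {(\<chi> i. if i \<in> I then 1 else 0) | I. card I = k}"
proof -
  have "(\<lambda>c. zero_sum_lift (a - c) - (\<chi> j. q)) ` delaunay_set banana_Q a
      = {v. (\<forall>j. v$j \<in> {0, 1}) \<and> (\<Sum>j\<in>UNIV. v$j) = real k}"
    (is "?image = ?zero_one")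
  proof
    show "?image \<subseteq> ?zero_one"
    proof
      fix v
      assume "v \<in> ?image"
      then obtain c where c: "c \<in> delaunay_set banana_Q a" and v: "v = zero_sum_lift (a - c) - (\<chi> j. q)"
        by blast
      have "v$j \<in> {0, 1}" for j
        using c by (auto simp: v delaunay_set_banana_Q[OF a])
      moreover have "(\<Sum>j\<in>UNIV. v$j) = real k"
        using q by (simp add: v sum_subtractf sum_zero_sum_lift)
      ultimately show "v \<in> ?zero_one"
        by simp
    qed
    show "?zero_one \<subseteq> ?image"
      using in_delaunay_set_banana_Q_image[OF a q] by blast
  qed
  also have "\<dots> = {(\<chi> i. if i \<in> I then 1 else 0) | I. card I = k}"
    by (rule zero_one_vectors_with_sum)
  finally show ?thesis .
qed

theorem corollary3p6:
  fixes a :: "real^'g::finite" and k :: nat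
  assumes "1 \<le> k" and "k \<le> CARD('g)"
    and "a \<in> bracket_k k"
    and "a extreme_point_of voronoi (banana_Q :: 'g \<Rightarrow> 'g \<Rightarrow> real)"
  shows "comb_equiv (delaunay_polytope banana_Q a) (hypersimplex k :: (real^('g option)) set)"
proof -
  define q where "q = - real k / real (CARD('g) + 1)"
  have lift_a: "zero_sum_lift a $ j \<in> {q, q + 1}" for j
    unfolding q_def using assms(3,1,2) by (rule zero_sum_lift_bracket_k)
  have "real CARD('g option) * q = - real k"
    by (simp add: q_def)
  with lift_a have vertices: "(\<lambda>c. zero_sum_lift (a - c) - (\<chi> j. q)) ` delaunay_set banana_Q a
      = {(\<chi> i. if i \<in> I then 1 else 0) | I. card I = k}"
    by (rule delaunay_set_banana_Q_image)
  define t where "t = zero_sum_lift a - (\<chi> j. q)"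
  define h where "h c = - zero_sum_lift c" for c :: "real^'g"
  have "linear h"
    unfolding h_def by (intro linear_compose_neg linear_zero_sum_lift)
  have "inj h"
    using inj_zero_sum_lift by (simp add: h_def inj_def)
  have affine: "(\<lambda>c. zero_sum_lift (a - c) - (\<chi> j. q)) = (\<lambda>c. t + h c)"
    by (simp add: fun_eq_iff zero_sum_lift_diff t_def h_def)
  have "hypersimplex k = (\<lambda>c. t + h c) ` delaunay_polytope banana_Q a"
    unfolding hypersimplex_def delaunay_polytope_def vertices[symmetric] affine
    by (rule convex_hull_affine_image[OF \<open>linear h\<close>])
  then show ?thesis
    using comb_equiv_affine_image[OF \<open>linear h\<close> \<open>inj h\<close>] by simp
qed

end
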